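(* For $n=1,2,3,\dots$, $$[n]_{\mathbb{Z},\mathbb{N}}=\prod_{b=2}^n b^{\operatorname{ord}_b(n)},$$ where $\operatorname{ord}_b(n)$ is the largest $\alpha\in\mathbb{N}$ such that $b^\alpha\mid n$.
   Context: $\mathbb{N}=\{0,1,2,\dots\}$. For an integer $b\ge0$ and $a\in\mathbb{Z}$ define $\operatorname{ord}_b(a):=\sup\{k\in\mathbb{N}: a\mathbb{Z}\subseteq b^k\mathbb{Z}\}$ (convention $0^0=1$); thus for $b\ge2$ it is the largest $k$ with $b^k\mid a$ ($+\infty$ for $a=0$), $\operatorname{ord}_0(a)=+\infty$ if $a=0$ and $0$ otherwise, and $\operatorname{ord}_1(a)=+\infty$. For nonempty $S\subseteq\mathbb{Z}$, a $b$-ordering of $S$ is a sequence $(a_i)_{i\ge0}$ in $S$ such that for each $i\ge1$, $a_i$ attains $\min_{a'\in S}\sum_{j=0}^{i-1}\operatorname{ord}_b(a'-a_j)$; the $b$-exponent sequence is $\alpha_k(S,b):=\sum_{j=0}^{k-1}\operatorname{ord}_b(a_k-a_j)$ for any $b$-ordering (independent of the choice). For $\mathcal{T}\subseteq\mathbb{N}$ the generalized factorial is $k!_{S,\mathcal{T}}:=\prod_{b\in\mathcal{T}}b^{\alpha_k(S,b)}$, with conventions $b^{+\infty}=0$ for $b=0$ and $b\ge2$, $1^{+\infty}=1$, and $b^0=1$ for all $b\in\mathbb{N}$. The generalized integer is $[n]_{S,\mathcal{T}}:=n!_{S,\mathcal{T}}/(n-1)!_{S,\mathcal{T}}$ for $1\le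 n<|S|$. *)

theory Defs
  imports Main "HOL-Library.Extended_Nat" "HOL-Library.Groups_Big_Fun"
begin

definition ordb :: "nat \<Rightarrow> int \<Rightarrow> enat" where
  "ordb b a = Sup (enat ` {k. (int b) ^ k dvd a})"

definition is_b_ordering :: "int set \<Rightarrow> nat \<Rightarrow> (nat \<Rightarrow> int) \<Rightarrow> bool" where
  "is_b_ordering S b a \<longleftrightarrow> (\<forall>i. a i \<in> S) \<and>
     (\<forall>i\<ge>1. \<forall>a'\<in>S. (\<Sum>j<i. ordb b (a i - a j)) \<le> (\<Sum>j<i. ordb b (a' - a j)))"

definition alpha :: "int set \<Rightarrow> nat \<Rightarrow> nat \<Rightarrow> enat" where
  "alpha S b k = (let a = (SOME a. is_b_ordering S b a) in (\<Sum>j<k. ordb b (a k - a j)))"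

text \<open>b^e with the conventions b^\<infinity> = 0 for b = 0 and b \<ge> 2, 1^\<infinity> = 1, b^0 = 1.\<close>
definition epow :: "nat \<Rightarrow> enat \<Rightarrow> nat" where
  "epow b e = (case e of enat n \<Rightarrow> b ^ n | \<infinity> \<Rightarrow> (if b = 1 then 1 else 0))"

text \<open>Generalized factorial k!_{S,T} = prod_{b in T} b^(alpha_k(S,b)) (product of the
  finitely many factors different from 1).\<close>
definition gen_fact :: "int set \<Rightarrow> nat set \<Rightarrow> nat \<Rightarrow> nat" where
  "gen_fact S T k = (\<Prod>b. (if b \<in> T then epow b (alpha S b k) else 1))"

definition gen_int :: "int set \<Rightarrow> nat set \<Rightarrow> nat \<Rightarrow> rat" where
  "gen_int S T n = of_nat (gen_fact S T n) / of_nat (gen_fact S T (n - 1))"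

end

theory Submission
  imports Defs
begin

text \<open>For \<open>b \<ge> 2\<close> every \<open>b\<close>-ordering \<open>a\<close> of \<open>\<int>\<close> is balanced: for every \<open>t\<close>, its
  first \<open>k\<close> terms meet each residue class modulo \<open>b\<^sup>t\<close> either \<open>\<lfloor>k/b\<^sup>t\<rfloor>\<close> or
  \<open>\<lfloor>k/b\<^sup>t\<rfloor> + 1\<close> times. Counting \<open>ord\<^sub>b(x - a\<^sub>j)\<close> as the number of \<open>t \<ge> 1\<close> with
  \<open>b\<^sup>t | x - a\<^sub>j\<close> turns \<open>\<Sum>\<^sub>j\<^sub><\<^sub>k ord\<^sub>b(x - a\<^sub>j)\<close> into the sum over \<open>t\<close> of the
  number of terms in the class of \<open>x\<close> modulo \<open>b\<^sup>t\<close>. So this sum is at least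
  \<open>\<Sum>\<^sub>t\<^sub>\<ge>\<^sub>1 \<lfloor>k/b\<^sup>t\<rfloor>\<close>, with equality exactly when \<open>x\<close> lies in a least filled class for
  every \<open>t\<close>; such \<open>x\<close> exist (choose its \<open>b\<close>-adic digits one at a time), and appending one
  keeps the sequence balanced. Hence \<open>\<alpha>\<^sub>k(\<int>, b) = \<Sum>\<^sub>t\<^sub>\<ge>\<^sub>1 \<lfloor>k/b\<^sup>t\<rfloor>\<close>. The bases \<open>0\<close>
  and \<open>1\<close> and all \<open>b > k\<close> contribute the factor \<open>1\<close>, and since
  \<open>\<lfloor>n/b\<^sup>t\<rfloor> - \<lfloor>(n-1)/b\<^sup>t\<rfloor> = [b\<^sup>t | n]\<close>, the quotient of consecutive factorials
  has \<open>b\<close>-exponent \<open>ord\<^sub>b(n)\<close>.\<close>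

lemma ordb_0_right [simp]: "ordb b 0 = \<infinity>"
proof -
  have "{k. int b ^ k dvd 0} = UNIV" by auto
  then show ?thesis
    unfolding ordb_def by (simp add: Sup_enat_def finite_image_iff inj_on_def)
qed

lemma ordb_0_left: "d \<noteq> 0 \<Longrightarrow> ordb 0 d = 0"
proof -
  assume "d \<noteq> 0"
  then have "{k. int 0 ^ k dvd d} = {0}" by (auto simp: zero_power)
  then show ?thesis unfolding ordb_def by (simp add: zero_enat_def)
qed

lemma pow_dvd_imp_less_abs:
  assumes "b \<ge> 2" and "d \<noteq> 0" and "int b ^ t dvd d"
  shows "t < nat \<bar>d\<bar>"
proof -
  have "int t < int b ^ t" using assms(1) by (simp flip: of_nat_power add: power_gt_expt)
  moreover have "\<bar>int b ^ t\<bar> \<le> \<bar>d\<bar>" using assms(2,3) by (rule dvd_imp_le_int)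
  ultimately have "int t < \<bar>d\<bar>" by linarith
  then show ?thesis by linarith
qed

lemma ordb_eq_card:
  assumes b: "b \<ge> 2" and d: "d \<noteq> 0" and N: "nat \<bar>d\<bar> \<le> N"
  shows "ordb b d = enat (card {t \<in> {1..N}. int b ^ t dvd d})"
proof -
  define K where "K = {t. int b ^ t dvd d}"
  have bound: "t < nat \<bar>d\<bar>" if "t \<in> K" for t
    using pow_dvd_imp_less_abs[OF b d] that by (simp add: K_def)
  then have "finite K" by (meson finite_lessThan finite_subset lessThan_iff subsetI)
  define m where "m = Max K"
  have "m \<in> K" unfolding m_def using \<open>finite K\<close> by (intro Max_in) (auto simp: K_def exI[of _ 0])
  have K: "K = {..m}"
  proof
    show "K \<subseteq> {..m}" unfolding m_def using \<open>finite K\<close> by auto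
    show "{..m} \<subseteq> K"
      using \<open>m \<in> K\<close> by (auto simp: K_def intro: dvd_trans[OF le_imp_power_dvd])
  qed
  then have dvd_iff: "int b ^ t dvd d \<longleftrightarrow> t \<le> m" for t by (auto simp: K_def)
  have "ordb b d = enat m"
    unfolding ordb_def K_def[symmetric] K by (rule cSup_eq_maximum) auto
  moreover have "{t \<in> {1..N}. int b ^ t dvd d} = {1..m}"
    using bound[OF \<open>m \<in> K\<close>] N by (auto simp: dvd_iff)
  ultimately show ?thesis by simp
qed

definition class_count :: "nat \<Rightarrow> (nat \<Rightarrow> int) \<Rightarrow> nat \<Rightarrow> nat \<Rightarrow> int \<Rightarrow> nat" where
  "class_count b a k t x = card {j. j < k \<and> int b ^ t dvd x - a j}"

lemma class_count_eq_sum: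
  "class_count b a k t x = (\<Sum>j<k. of_bool (int b ^ t dvd x - a j))"
  by (simp add: class_count_def Int_def)

lemma class_count_0 [simp]: "class_count b a k 0 x = k"
  by (simp add: class_count_def)

lemma class_count_Suc:
  "class_count b a (Suc k) t x = class_count b a k t x + of_bool (int b ^ t dvd x - a k)"
  by (simp del: sum_of_bool_eq add: class_count_eq_sum)

lemma class_count_antimono:
  "s \<le> t \<Longrightarrow> class_count b a k t x \<le> class_count b a k s x"
  unfolding class_count_def
  by (intro card_mono) (auto intro: dvd_trans[OF le_imp_power_dvd])

lemma class_count_cong:
  assumes "int b ^ t dvd x - y"
  shows "class_count b a k t x = class_count b a k t y"
proof -
  have "int b ^ t dvd x - a j \<longleftrightarrow> int b ^ t dvd y - a j" for j
    using dvd_add_right_iff[OF assms, of "y - a j"] by simp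
  then show ?thesis unfolding class_count_def by simp
qed

lemma class_count_eq_0_iff:
  "class_count b a k t x = 0 \<longleftrightarrow> (\<forall>j<k. \<not> int b ^ t dvd x - a j)"
  by (auto simp: class_count_def)

lemma residue_representative:
  "(B :: int) > 0 \<Longrightarrow> {c \<in> {0..<B}. B dvd c - y} = {y mod B}"
  by (auto simp flip: mod_eq_dvd_iff)

lemma sum_class_count_residues:
  assumes "b \<ge> 1"
  shows "(\<Sum>c\<in>{0..<int b ^ t}. class_count b a k t c) = k"
proof -
  have "(\<Sum>c\<in>{0..<int b ^ t}. class_count b a k t c)
      = (\<Sum>j<k. \<Sum>c\<in>{0..<int b ^ t}. of_bool (int b ^ t dvd c - a j))"
    unfolding class_count_eq_sum by (rule sum.swap)
  also have "\<dots> = k"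
    using residue_representative[of "int b ^ t"] assms by (simp add: Int_def)
  finally show ?thesis .
qed

lemma sum_class_count_lifts:
  assumes b: "b \<ge> 1"
  shows "(\<Sum>i\<in>{0..<int b}. class_count b a k (Suc t) (x + i * int b ^ t)) = class_count b a k t x"
proof -
  have lifts: "(\<Sum>i\<in>{0..<int b}. of_bool (int b ^ Suc t dvd y + i * int b ^ t))
      = (of_bool (int b ^ t dvd y) :: nat)" for y
  proof (cases "int b ^ t dvd y")
    case True
    then obtain z where z: "y = int b ^ t * z" by blast
    have "int b ^ Suc t dvd y + i * int b ^ t \<longleftrightarrow> int b * int b ^ t dvd (i - - z) * int b ^ t"
      for i by (simp add: z algebra_simps)
    then have "int b ^ Suc t dvd y + i * int b ^ t \<longleftrightarrow> int b dvd i - (- z)" for i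
      using b by simp
    then show ?thesis using True b residue_representative[of "int b" "- z"] by (simp add: Int_def)
  next
    case False
    have "\<not> int b ^ Suc t dvd y + i * int b ^ t" for i
    proof
      assume "int b ^ Suc t dvd y + i * int b ^ t"
      then have "int b ^ t dvd y + i * int b ^ t" by (metis power_Suc dvd_mult_right)
      with False show False by (simp add: dvd_add_left_iff)
    qed
    then show ?thesis using False by simp
  qed
  have "(\<Sum>i\<in>{0..<int b}. class_count b a k (Suc t) (x + i * int b ^ t))
      = (\<Sum>j<k. \<Sum>i\<in>{0..<int b}. of_bool (int b ^ Suc t dvd (x - a j) + i * int b ^ t))"
    unfolding class_count_eq_sum by (subst sum.swap) (simp del: sum_of_bool_eq add: algebra_simps)
  also have "\<dots> = class_count b a k t x"
    by (simp only: lifts class_count_eq_sum)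
  finally show ?thesis .
qed

definition ord_sum :: "nat \<Rightarrow> (nat \<Rightarrow> int) \<Rightarrow> nat \<Rightarrow> int \<Rightarrow> enat" where
  "ord_sum b a k x = (\<Sum>j<k. ordb b (x - a j))"

lemma is_b_ordering_iff_ord_sum:
  "is_b_ordering S b a \<longleftrightarrow> (\<forall>i. a i \<in> S) \<and> (\<forall>i. \<forall>x\<in>S. ord_sum b a i (a i) \<le> ord_sum b a i x)"
proof -
  have "ord_sum b a 0 (a 0) \<le> ord_sum b a 0 x" for x by (simp add: ord_sum_def)
  then show ?thesis
    unfolding is_b_ordering_def ord_sum_def[symmetric] by (auto simp: Suc_le_eq) (metis neq0_conv)
qed

lemma ord_sum_eq_infinity: "j < k \<Longrightarrow> ord_sum b a k (a j) = \<infinity>"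
  unfolding ord_sum_def by (simp add: sum.remove[of _ j])

lemma ord_sum_eq_sum_class_count:
  assumes b: "b \<ge> 2" and x: "x \<notin> a ` {..<k}"
  obtains N where "k \<le> N" and "ord_sum b a k x = enat (\<Sum>t\<in>{1..N}. class_count b a k t x)"
proof
  define N where "N = k + (\<Sum>j<k. nat \<bar>x - a j\<bar>)"
  show "k \<le> N" by (simp add: N_def)
  have "ordb b (x - a j) = enat (\<Sum>t\<in>{1..N}. of_bool (int b ^ t dvd x - a j))" if "j < k" for j
  proof -
    have "nat \<bar>x - a j\<bar> \<le> N"
      unfolding N_def using that by (intro trans_le_add2 member_le_sum) auto
    moreover have "x - a j \<noteq> 0" using x that by force
    ultimately show ?thesis using ordb_eq_card[OF b] by (simp add: Int_def)
  qed
  then have "ord_sum b a k x = (\<Sum>j<k. of_nat (\<Sum>t\<in>{1..N}. of_bool (int b ^ t dvd x - a j)))"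
    unfolding ord_sum_def by (simp del: sum_of_bool_eq add: of_nat_eq_enat)
  also have "\<dots> = of_nat (\<Sum>t\<in>{1..N}. class_count b a k t x)"
    unfolding class_count_eq_sum of_nat_sum[symmetric] by (subst sum.swap) (rule refl)
  finally show "ord_sum b a k x = enat (\<Sum>t\<in>{1..N}. class_count b a k t x)"
    by (simp add: of_nat_eq_enat)
qed

text \<open>For prime \<open>b\<close> this is Legendre's formula for the exponent of \<open>b\<close> in \<open>k!\<close>.\<close>
definition legendre :: "nat \<Rightarrow> nat \<Rightarrow> nat" where
  "legendre b k = (\<Sum>t\<in>{1..k}. k div b ^ t)"

lemma legendre_eq_sum:
  assumes "b \<ge> 2" and "k \<le> N"
  shows "(\<Sum>t\<in>{1..N}. k div b ^ t) = legendre b k"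
  unfolding legendre_def
proof (rule sum.mono_neutral_right)
  show "\<forall>t\<in>{1..N} - {1..k}. k div b ^ t = 0"
  proof
    fix t assume "t \<in> {1..N} - {1..k}"
    then have "k < t" by auto
    also have "t < b ^ t" using assms(1) by (simp add: power_gt_expt)
    finally show "k div b ^ t = 0" by simp
  qed
qed (use assms(2) in auto)

lemma legendre_eq_0:
  assumes "k < b"
  shows "legendre b k = 0"
proof -
  have "k < b ^ t" if "t \<ge> 1" for t
    using assms self_le_power[of b t] that by simp
  then show ?thesis unfolding legendre_def by simp
qed

definition balanced :: "nat \<Rightarrow> (nat \<Rightarrow> int) \<Rightarrow> nat \<Rightarrow> bool" where
  "balanced b a k \<longleftrightarrow>
     (\<forall>t x. k div b ^ t \<le> class_count b a k t x \<and> class_count b a k t x \<le> k div b ^ t + 1)"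

lemma balanced_0: "balanced b a 0"
  by (simp add: balanced_def class_count_def)

lemma balanced_ex_least_class:
  assumes b: "b \<ge> 2" and bal: "balanced b a k"
  shows "\<exists>x. \<forall>t. class_count b a k t x = k div b ^ t"
proof -
  have "\<exists>x. \<forall>t\<le>T. class_count b a k t x = k div b ^ t" for T
  proof (induction T)
    case 0
    show ?case by simp
  next
    case (Suc T)
    then obtain x where x: "\<forall>t\<le>T. class_count b a k t x = k div b ^ t" by blast
    define q where "q = k div b ^ Suc T"
    define lift where "lift i = x + i * int b ^ T" for i
    have "\<exists>i\<in>{0..<int b}. class_count b a k (Suc T) (lift i) \<le> q"
    proof (rule ccontr)
      assume "\<not> ?thesis"
      then have "card {0..<int b} * (q + 1) \<le> (\<Sum>i\<in>{0..<int b}. class_count b a k (Suc T) (lift i))"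
        using sum_bounded_below[of "{0..<int b}" "q + 1"] by (force simp: not_le Suc_le_eq)
      also have "\<dots> = k div b ^ T"
        using sum_class_count_lifts[of b a k T x] b x by (simp add: lift_def)
      finally have "b * (q + 1) \<le> k div b ^ T" by simp
      moreover have "q = k div b ^ T div b" by (simp only: q_def power_Suc2 div_mult2_eq)
      then have "k div b ^ T < b * (q + 1)"
        using dividend_less_times_div[of b "k div b ^ T"] b by simp
      ultimately show False by simp
    qed
    then obtain i where i: "class_count b a k (Suc T) (lift i) \<le> q" by blast
    have "class_count b a k t (lift i) = k div b ^ t" if "t \<le> Suc T" for t
    proof (cases "t = Suc T")
      case True
      have "q \<le> class_count b a k (Suc T) (lift i)" using bal unfolding balanced_def q_def by blast
      with i True show ?thesis by (simp add: q_def)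
    next
      case False
      with that have "t \<le> T" by simp
      then have "int b ^ t dvd lift i - x" by (simp add: lift_def le_imp_power_dvd)
      then show ?thesis using x \<open>t \<le> T\<close> by (simp add: class_count_cong)
    qed
    then show ?case by blast
  qed
  then obtain x where x: "\<forall>t\<le>k. class_count b a k t x = k div b ^ t" by blast
  have "class_count b a k t x = k div b ^ t" for t
  proof (cases "t \<le> k")
    case False
    have "k < b ^ k" "k < b ^ t" using b False power_gt_expt[of b k] power_gt_expt[of b t] by simp_all
    then show ?thesis using class_count_antimono[of k t b a k x] x False by simp
  qed (use x in simp)
  then show ?thesis by blast
qed

lemma balanced_legendre_le_ord_sum:
  assumes b: "b \<ge> 2" and bal: "balanced b a k"
  shows "enat (legendre b k) \<le> ord_sum b a k x"
proof (cases "x \<in> a ` {..<k}")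
  case True
  then show ?thesis by (auto simp: ord_sum_eq_infinity)
next
  case False
  then obtain N where "k \<le> N" and N: "ord_sum b a k x = enat (\<Sum>t\<in>{1..N}. class_count b a k t x)"
    using ord_sum_eq_sum_class_count[OF b] by blast
  have "legendre b k = (\<Sum>t\<in>{1..N}. k div b ^ t)"
    using legendre_eq_sum[OF b \<open>k \<le> N\<close>] by simp
  also have "\<dots> \<le> (\<Sum>t\<in>{1..N}. class_count b a k t x)"
    using bal unfolding balanced_def by (intro sum_mono) blast
  finally show ?thesis using N by simp
qed

lemma balanced_ord_sum_eq_legendre_iff:
  assumes b: "b \<ge> 2" and bal: "balanced b a k"
  shows "ord_sum b a k x = legendre b k \<longleftrightarrow> (\<forall>t. class_count b a k t x = k div b ^ t)"
proof
  assume least: "\<forall>t. class_count b a k t x = k div b ^ t"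
  have "k < b ^ k" using b by (simp add: power_gt_expt)
  with least have "x \<notin> a ` {..<k}" using class_count_eq_0_iff[of b a k k x] by auto
  then obtain N where "k \<le> N" and "ord_sum b a k x = enat (\<Sum>t\<in>{1..N}. class_count b a k t x)"
    using ord_sum_eq_sum_class_count[OF b] by blast
  then show "ord_sum b a k x = legendre b k" using least legendre_eq_sum[OF b] by simp
next
  assume eq: "ord_sum b a k x = legendre b k"
  then have "x \<notin> a ` {..<k}" by (auto simp: ord_sum_eq_infinity)
  then obtain N where "k \<le> N" and "ord_sum b a k x = enat (\<Sum>t\<in>{1..N}. class_count b a k t x)"
    using ord_sum_eq_sum_class_count[OF b] by blast
  with eq have sums: "(\<Sum>t\<in>{1..N}. k div b ^ t) = (\<Sum>t\<in>{1..N}. class_count b a k t x)"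
    using legendre_eq_sum[OF b] by simp
  have low: "k div b ^ t \<le> class_count b a k t x" for t
    using bal unfolding balanced_def by blast
  have upto_N: "class_count b a k t x = k div b ^ t" if "t \<in> {1..N}" for t
    using sum_mono_inv[OF sums low that] by simp
  have "k div b ^ N = 0" using b \<open>k \<le> N\<close> power_gt_expt[of b N] by simp
  show "\<forall>t. class_count b a k t x = k div b ^ t"
  proof
    fix t
    consider "t = 0" | "t \<in> {1..N}" | "N < t" by fastforce
    then show "class_count b a k t x = k div b ^ t"
    proof cases
      case 3
      then have "class_count b a k t x \<le> class_count b a k N x" by (intro class_count_antimono) simp
      moreover have "k div b ^ t = 0"
        using b 3 \<open>k \<le> N\<close> power_gt_expt[of b t] by simp
      ultimately show ?thesis using upto_N[of N] \<open>k div b ^ N = 0\<close> \<open>k \<le> N\<close> by (cases N) auto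
    qed (use upto_N in simp_all)
  qed
qed

lemma balanced_minimiser_least_class:
  assumes b: "b \<ge> 2" and bal: "balanced b a k" and min: "\<forall>y. ord_sum b a k x \<le> ord_sum b a k y"
  shows "\<forall>t. class_count b a k t x = k div b ^ t"
proof -
  obtain y where "\<forall>t. class_count b a k t y = k div b ^ t"
    using balanced_ex_least_class[OF b bal] by blast
  then have "ord_sum b a k y = legendre b k"
    using balanced_ord_sum_eq_legendre_iff[OF b bal] by blast
  then have "ord_sum b a k x = legendre b k"
    using min balanced_legendre_le_ord_sum[OF b bal, of x] by (metis antisym)
  then show ?thesis using balanced_ord_sum_eq_legendre_iff[OF b bal] by blast
qed

text \<open>If \<open>b\<^sup>t\<close> divides \<open>k + 1\<close>, the \<open>k\<close> terms fill all \<open>b\<^sup>t\<close> classes up to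
  \<open>k div b\<^sup>t + 1\<close> but one, so two distinct classes cannot both be short.\<close>
lemma balanced_class_count_eq_Suc:
  assumes b: "b \<ge> 1" and bal: "balanced b a k"
    and y: "class_count b a k t y = k div b ^ t"
    and xy: "\<not> int b ^ t dvd x - y" and dvd: "b ^ t dvd Suc k"
  shows "class_count b a k t x = k div b ^ t + 1"
proof (rule ccontr)
  define B where "B = int b ^ t"
  define q where "q = k div b ^ t"
  have bal_t: "q \<le> class_count b a k t c \<and> class_count b a k t c \<le> q + 1" for c
    using bal unfolding balanced_def q_def by blast
  assume "class_count b a k t x \<noteq> k div b ^ t + 1"
  then have x: "class_count b a k t x = q" using bal_t[of x] by (simp add: q_def)
  have "Suc k div b ^ t = q + 1" using dvd by (simp add: div_Suc q_def dvd_eq_mod_eq_0)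
  then have Suc_k: "Suc k = b ^ t * (q + 1)" using dvd_mult_div_cancel[OF dvd] by simp
  have "B > 0" using b by (simp add: B_def)
  define cx where "cx = x mod B"
  define cy where "cy = y mod B"
  have cls: "cx \<in> {0..<B}" "cy \<in> {0..<B}" "cx \<noteq> cy"
    using \<open>B > 0\<close> xy by (auto simp: cx_def cy_def B_def mod_eq_dvd_iff)
  have "class_count b a k t cx = q" "class_count b a k t cy = q"
    using x y class_count_cong[of b t cx x] class_count_cong[of b t cy y]
    by (simp_all add: cx_def cy_def B_def q_def flip: mod_eq_dvd_iff)
  then have "(\<Sum>c\<in>{0..<B}. class_count b a k t c + of_bool (c = cx) + of_bool (c = cy))
      \<le> (\<Sum>c\<in>{0..<B}. q + 1)"
    using bal_t cls(3) by (intro sum_mono) auto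
  moreover have "(\<Sum>c\<in>{0..<B}. class_count b a k t c + of_bool (c = cx) + of_bool (c = cy)) = k + 2"
    using sum_class_count_residues[OF b] cls(1,2) by (simp add: sum.distrib B_def)
  moreover have "(\<Sum>c\<in>{0..<B}. q + 1) = Suc k"
    by (simp add: Suc_k B_def flip: of_nat_power)
  ultimately show False by simp
qed

lemma balanced_Suc:
  assumes b: "b \<ge> 2" and bal: "balanced b a k"
    and least: "\<forall>t. class_count b a k t (a k) = k div b ^ t"
  shows "balanced b a (Suc k)"
  unfolding balanced_def
proof (intro allI)
  fix t x
  have Suc_div: "Suc k div b ^ t = k div b ^ t + of_bool (b ^ t dvd Suc k)"
    by (simp add: div_Suc dvd_eq_mod_eq_0)
  show "Suc k div b ^ t \<le> class_count b a (Suc k) t x \<and>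
        class_count b a (Suc k) t x \<le> Suc k div b ^ t + 1"
  proof (cases "int b ^ t dvd x - a k")
    case True
    then have "class_count b a (Suc k) t x = k div b ^ t + 1"
      using least class_count_cong[OF True] by (simp add: class_count_Suc)
    then show ?thesis using Suc_div by simp
  next
    case False
    then have "class_count b a (Suc k) t x = class_count b a k t x"
      by (simp add: class_count_Suc)
    moreover have "class_count b a k t x = k div b ^ t + 1" if "b ^ t dvd Suc k"
      using balanced_class_count_eq_Suc[OF _ bal least[rule_format] False that] b by simp
    ultimately show ?thesis using Suc_div bal unfolding balanced_def by fastforce
  qed
qed

lemma is_b_ordering_UNIV_balanced:
  assumes b: "b \<ge> 2" and ord: "is_b_ordering UNIV b a"
  shows "balanced b a k"
proof (induction k)
  case 0
  show ?case by (rule balanced_0)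
next
  case (Suc k)
  have "\<forall>y. ord_sum b a k (a k) \<le> ord_sum b a k y"
    using ord by (simp add: is_b_ordering_iff_ord_sum)
  then show ?case
    using balanced_Suc[OF b Suc] balanced_minimiser_least_class[OF b Suc] by blast
qed

lemma is_b_ordering_UNIV_ord_sum:
  assumes b: "b \<ge> 2" and ord: "is_b_ordering UNIV b a"
  shows "ord_sum b a k (a k) = legendre b k"
proof -
  have bal: "balanced b a k" using is_b_ordering_UNIV_balanced[OF b ord] .
  have "\<forall>y. ord_sum b a k (a k) \<le> ord_sum b a k y"
    using ord by (simp add: is_b_ordering_iff_ord_sum)
  then show ?thesis
    using balanced_minimiser_least_class[OF b bal] balanced_ord_sum_eq_legendre_iff[OF b bal] by blast
qed

lemma is_arg_min_arg_min_wellorder: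
  fixes f :: "'a \<Rightarrow> 'b::wellorder"
  assumes "P x"
  shows "is_arg_min f P (arg_min f P)"
proof -
  let ?m = "LEAST v. \<exists>x. P x \<and> f x = v"
  obtain y where "P y" and y: "f y = ?m"
    using LeastI_ex[of "\<lambda>v. \<exists>x. P x \<and> f x = v"] assms by blast
  have "\<not> f z < ?m" if "P z" for z
    using not_less_Least[of "f z" "\<lambda>v. \<exists>x. P x \<and> f x = v"] that by blast
  with \<open>P y\<close> y have "is_arg_min f P y" unfolding is_arg_min_def by simp
  then show ?thesis unfolding arg_min_def by (rule someI)
qed

text \<open>Without some \<open>b\<close>-ordering of \<open>S\<close>, the choice in \<^const>\<open>alpha\<close> would be arbitrary.\<close>
function greedy_b_ordering :: "int set \<Rightarrow> nat \<Rightarrow> nat \<Rightarrow> int" where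
  "greedy_b_ordering S b k =
     (ARG_MIN (\<lambda>x. \<Sum>j<k. ordb b (x - greedy_b_ordering S b j)) x. x \<in> S)"
  by auto
termination by (relation "measure (\<lambda>(S, b, k). k)") auto

declare greedy_b_ordering.simps [simp del]

lemma is_b_ordering_greedy:
  assumes "S \<noteq> {}"
  shows "is_b_ordering S b (greedy_b_ordering S b)"
proof -
  obtain x where "x \<in> S" using assms by blast
  have "greedy_b_ordering S b k = arg_min (ord_sum b (greedy_b_ordering S b) k) (\<lambda>x. x \<in> S)" for k
    unfolding ord_sum_def by (rule greedy_b_ordering.simps)
  then have "is_arg_min (ord_sum b (greedy_b_ordering S b) k) (\<lambda>x. x \<in> S) (greedy_b_ordering S b k)"
    for k using is_arg_min_arg_min_wellorder[of "\<lambda>x. x \<in> S", OF \<open>x \<in> S\<close>] by simp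
  then show ?thesis by (simp add: is_b_ordering_iff_ord_sum is_arg_min_linorder)
qed

lemma alpha_eqI:
  assumes "S \<noteq> {}" and "\<And>a. is_b_ordering S b a \<Longrightarrow> ord_sum b a k (a k) = e"
  shows "alpha S b k = e"
proof -
  have "is_b_ordering S b (SOME a. is_b_ordering S b a)"
    using someI_ex[of "\<lambda>a. is_b_ordering S b a"] is_b_ordering_greedy[OF assms(1)] by blast
  then show ?thesis using assms(2) by (simp add: alpha_def ord_sum_def)
qed

lemma alpha_UNIV: "b \<ge> 2 \<Longrightarrow> alpha UNIV b k = legendre b k"
  by (rule alpha_eqI) (simp_all add: is_b_ordering_UNIV_ord_sum)

lemma alpha_base_0:
  assumes "infinite S"
  shows "alpha S 0 k = 0"
proof (rule alpha_eqI)
  show "S \<noteq> {}" using assms by auto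
  fix a assume ord: "is_b_ordering S 0 a"
  have "infinite (S - a ` {..<k})" using assms by (simp add: Diff_infinite_finite)
  then obtain x where x: "x \<in> S" "x \<notin> a ` {..<k}" using infinite_imp_nonempty by blast
  then have "ord_sum 0 a k x = 0"
    unfolding ord_sum_def by (intro sum.neutral) (force intro: ordb_0_left)
  then show "ord_sum 0 a k (a k) = 0"
    using ord x(1) by (metis is_b_ordering_iff_ord_sum le_zero_eq)
qed

lemma epow_alpha_UNIV: "epow b (alpha UNIV b k) = (if b \<ge> 2 then b ^ legendre b k else 1)"
proof -
  consider "b = 0" | "b = 1" | "b \<ge> 2" by linarith
  then show ?thesis
  proof cases
    case 1
    then show ?thesis by (simp add: alpha_base_0 epow_def zero_enat_def)
  next
    case 2
    then show ?thesis by (simp add: epow_def split: enat.split)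
  next
    case 3
    then show ?thesis by (simp add: alpha_UNIV epow_def)
  qed
qed

lemma gen_fact_UNIV:
  assumes "k \<le> n"
  shows "gen_fact UNIV UNIV k = (\<Prod>b\<in>{2..n}. b ^ legendre b k)"
proof -
  have "gen_fact UNIV UNIV k = Prod_any (\<lambda>b. if b \<ge> 2 then b ^ legendre b k else 1)"
    unfolding gen_fact_def by (simp add: epow_alpha_UNIV)
  also have "\<dots> = (\<Prod>b\<in>{2..n}. if b \<ge> 2 then b ^ legendre b k else 1)"
  proof (rule Prod_any.expand_superset)
    show "{b. (if b \<ge> 2 then b ^ legendre b k else 1) \<noteq> 1} \<subseteq> {2..n}"
    proof
      fix b assume "b \<in> {b. (if b \<ge> 2 then b ^ legendre b k else 1) \<noteq> 1}"
      then have "b \<ge> 2" and "legendre b k \<noteq> 0" by (auto split: if_splits)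
      moreover have "b \<le> k" using legendre_eq_0[of k b] \<open>legendre b k \<noteq> 0\<close> by linarith
      ultimately show "b \<in> {2..n}" using assms by simp
    qed
  qed simp
  also have "\<dots> = (\<Prod>b\<in>{2..n}. b ^ legendre b k)" by (intro prod.cong) auto
  finally show ?thesis .
qed

lemma legendre_Suc:
  assumes b: "b \<ge> 2"
  shows "legendre b (Suc m) = legendre b m + the_enat (ordb b (int (Suc m)))"
proof -
  have "legendre b (Suc m) = (\<Sum>t\<in>{1..Suc m}. m div b ^ t + of_bool (b ^ t dvd Suc m))"
    unfolding legendre_def by (intro sum.cong refl) (simp add: div_Suc dvd_eq_mod_eq_0)
  also have "\<dots> = legendre b m + (\<Sum>t\<in>{1..Suc m}. of_bool (b ^ t dvd Suc m))"
    using legendre_eq_sum[OF b, of m "Suc m"] by (simp only: sum.distrib)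
  also have "(\<Sum>t\<in>{1..Suc m}. of_bool (b ^ t dvd Suc m)) = card {t \<in> {1..Suc m}. b ^ t dvd Suc m}"
    by (simp add: Int_def del: sum.cl_ivl_Suc)
  also have "card {t \<in> {1..Suc m}. b ^ t dvd Suc m} = the_enat (ordb b (int (Suc m)))"
  proof -
    have "int b ^ t dvd int (Suc m) \<longleftrightarrow> b ^ t dvd Suc m" for t
      unfolding of_nat_power[symmetric] of_nat_dvd_iff by (rule refl)
    then show ?thesis using ordb_eq_card[OF b, of "int (Suc m)" "Suc m"] by simp
  qed
  finally show ?thesis .
qed

theorem theorem7p3:
  fixes n :: nat
  assumes "n \<ge> 1"
  shows "gen_int (UNIV :: int set) (UNIV :: nat set) n
           = of_nat (\<Prod>b = 2..n. b ^ the_enat (ordb b (int n)))"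
proof -
  obtain m where n: "n = Suc m" using assms by (cases n) auto
  define P where "P = (\<Prod>b = 2..n. b ^ the_enat (ordb b (int n)))"
  have prev: "gen_fact UNIV UNIV m = (\<Prod>b = 2..n. b ^ legendre b m)"
    by (rule gen_fact_UNIV) (simp add: n)
  have "gen_fact UNIV UNIV n = (\<Prod>b = 2..n. b ^ legendre b n)"
    by (rule gen_fact_UNIV) simp
  also have "\<dots> = (\<Prod>b = 2..n. b ^ legendre b m * b ^ the_enat (ordb b (int n)))"
    by (intro prod.cong refl) (simp add: n legendre_Suc power_add)
  also have "\<dots> = gen_fact UNIV UNIV m * P"
    unfolding prev P_def by (rule prod.distrib)
  finally have "gen_fact UNIV UNIV n = gen_fact UNIV UNIV m * P" .
  moreover have "gen_fact UNIV UNIV m \<noteq> 0" unfolding prev by (simp add: prod_zero_iff)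
  ultimately show ?thesis unfolding gen_int_def P_def by (simp add: n)
qed

end
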